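(* Let $\mathcal{B}$ be a Boolean control network with state set $\mathcal{S}$. For any two nonempty sets of states $\mathsf{S}^1,\mathsf{S}^2\subseteq\mathcal{S}$, if $\mathsf{S}^1\subseteq\mathsf{S}^2$ and $\Gamma(\mathsf{S}^2)\ne\infty$, then $\psi(\mathsf{S}^2)\subseteq\psi(\mathsf{S}^1)$.
   Context: $\mathbb{B}=\{0,1\}$. A BCN has inputs $\mathcal{I}=\mathbb{B}^\ell$, states $\mathcal{S}=\mathbb{B}^m$, outputs $\mathcal{O}=\mathbb{B}^n$ and updating rules $\sigma:\mathcal{I}\times\mathcal{S}\to\mathcal{S}$, $\rho:\mathcal{S}\to\mathcal{O}$, with $\mathsf{s}(t+1)=\sigma(\mathsf{i}(t),\mathsf{s}(t))$, $\mathsf{o}(t)=\rho(\mathsf{s}(t))$. With $\varepsilon$ denoting empty input/output, let $\xi(\mathsf{i},\mathsf{s})=\sigma(\mathsf{i},\mathsf{s})$ for $\mathsf{i}\ne\varepsilon$, $\xi(\varepsilon,\mathsf{s})=\mathsf{s}$; for $\mathsf{S}\subseteq\mathcal{S}$, $\zeta(\mathsf{S},\mathsf{i},\mathsf{o})=\{\xi(\mathsf{i},\mathsf{s}):\mathsf{s}\in\mathsf{S},\rho(\xi(\mathsf{i},\mathsf{s}))=\mathsf{o}\}$ if $\mathsf{o}\ne\varepsilon$ and $\zeta(\mathsf{S},\mathsf{i},\varepsilon)=\{\xi(\mathsf{i},\mathsf{s}):\mathsf{s}\in\mathsf{S}\}$. For nonempty $\mathsf{S}$: $P_0(\mathsf{S})$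 iff $|\mathsf{S}|=1$; $P_{n+1}(\mathsf{S})$ iff $|\mathsf{S}|=1$ or there is $\mathsf{i}\in\mathcal{I}$ with $|\zeta(\mathsf{S},\mathsf{i},\varepsilon)|=|\mathsf{S}|$ such that every nonempty $\zeta(\mathsf{S},\mathsf{i},\mathsf{o})$, $\mathsf{o}\in\mathcal{O}$, satisfies $P_n$. $\Gamma(\mathsf{S})\in\mathbb{N}\cup\{\infty\}$ is the least $n$ with $P_n(\mathsf{S})$, or $\infty$ if none. For nonempty $\mathsf{S}$, $\psi(\mathsf{S})=\{\mathsf{i}\in\mathcal{I}: |\zeta(\mathsf{S},\mathsf{i},\varepsilon)|=|\mathsf{S}|$ and for all $\mathsf{o}\in\mathcal{O}$, $\zeta(\mathsf{S},\mathsf{i},\mathsf{o})\ne\emptyset\Rightarrow\Gamma(\zeta(\mathsf{S},\mathsf{i},\mathsf{o}))\ne\infty\}$. *)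

theory Defs
  imports Main "HOL-Library.Extended_Nat"
begin

text \<open>A BCN with l inputs, m state variables, n outputs. Elements of B^k are
  represented as bool lists of length k.
  The empty input/output epsilon is represented by None (option type).\<close>

definition vecs :: "nat \<Rightarrow> bool list set" where
  "vecs k = {xs. length xs = k}"

definition xi :: "(bool list \<Rightarrow> bool list \<Rightarrow> bool list) \<Rightarrow> bool list option \<Rightarrow> bool list \<Rightarrow> bool list" where
  "xi sigma i s = (case i of None \<Rightarrow> s | Some i' \<Rightarrow> sigma i' s)"

definition zeta :: "(bool list \<Rightarrow> bool list \<Rightarrow> bool list) \<Rightarrow> (bool list \<Rightarrow> bool list)
    \<Rightarrow> bool list set \<Rightarrow> bool list option \<Rightarrow> bool list option \<Rightarrow> bool list set" where
  "zeta sigma rho S i ou = (case ou of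
      None \<Rightarrow> {xi sigma i s | s. s \<in> S}
    | Some o' \<Rightarrow> {xi sigma i s | s. s \<in> S \<and> rho (xi sigma i s) = o'})"

fun P :: "nat \<Rightarrow> nat \<Rightarrow> (bool list \<Rightarrow> bool list \<Rightarrow> bool list) \<Rightarrow> (bool list \<Rightarrow> bool list)
    \<Rightarrow> nat \<Rightarrow> bool list set \<Rightarrow> bool" where
  "P l n sigma rho 0 S = (card S = 1)"
| "P l n sigma rho (Suc k) S = (card S = 1 \<or>
     (\<exists>i\<in>vecs l. card (zeta sigma rho S (Some i) None) = card S \<and>
        (\<forall>ou\<in>vecs n. zeta sigma rho S (Some i) (Some ou) \<noteq> {} \<longrightarrow>
            P l n sigma rho k (zeta sigma rho S (Some i) (Some ou)))))"

definition Gamma :: "nat \<Rightarrow> nat \<Rightarrow> (bool list \<Rightarrow> bool list \<Rightarrow> bool list) \<Rightarrow> (bool list \<Rightarrow> bool list)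
    \<Rightarrow> bool list set \<Rightarrow> enat" where
  "Gamma l n sigma rho S =
     (if \<exists>k. P l n sigma rho k S then enat (LEAST k. P l n sigma rho k S) else \<infinity>)"

definition psi :: "nat \<Rightarrow> nat \<Rightarrow> (bool list \<Rightarrow> bool list \<Rightarrow> bool list) \<Rightarrow> (bool list \<Rightarrow> bool list)
    \<Rightarrow> bool list set \<Rightarrow> bool list set" where
  "psi l n sigma rho S = {i \<in> vecs l.
     card (zeta sigma rho S (Some i) None) = card S \<and>
     (\<forall>ou\<in>vecs n. zeta sigma rho S (Some i) (Some ou) \<noteq> {} \<longrightarrow>
        Gamma l n sigma rho (zeta sigma rho S (Some i) (Some ou)) \<noteq> \<infinity>)}"

end

theory Submission
  imports Defs
begin

text \<open>An input that is injective on a set of states is injective on every subset, and every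
  output-class of a subset lies in the corresponding output-class of the superset. So
  distinguishability (the predicates P) passes to nonempty subsets by induction on the
  horizon, and with it finiteness of Gamma and membership in psi.\<close>

lemma finite_vecs: "finite (vecs k)"
  using finite_lists_length_eq[of "UNIV :: bool set" k] by (simp add: vecs_def)

lemma card_image_eq_subset:
  assumes "finite T" "T' \<subseteq> T" "card (f ` T) = card T"
  shows "card (f ` T') = card T'"
proof -
  have "inj_on f T" using assms(1,3) by (rule eq_card_imp_inj_on)
  then have "inj_on f T'" using assms(2) by (rule inj_on_subset)
  then show ?thesis by (rule card_image)
qed

lemma zeta_None: "zeta sigma rho S i None = xi sigma i ` S"
  by (auto simp: zeta_def)

lemma zeta_subset_image: "zeta sigma rho S i ou \<subseteq> xi sigma i ` S"
  by (cases ou) (auto simp: zeta_def)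

lemma finite_zeta: "finite S \<Longrightarrow> finite (zeta sigma rho S i ou)"
  by (rule finite_subset[OF zeta_subset_image finite_imageI])

lemma zeta_mono: "T' \<subseteq> T \<Longrightarrow> zeta sigma rho T' i ou \<subseteq> zeta sigma rho T i ou"
  by (cases ou) (auto simp: zeta_def)

lemma card_zeta_None_subset:
  assumes "finite T" "T' \<subseteq> T" "card (zeta sigma rho T i None) = card T"
  shows "card (zeta sigma rho T' i None) = card T'"
  using card_image_eq_subset[OF assms(1,2)] assms(3) by (simp add: zeta_None)

lemma card_1_subset_eq: "card T = 1 \<Longrightarrow> T' \<subseteq> T \<Longrightarrow> T' \<noteq> {} \<Longrightarrow> T' = T"
  by (metis card_1_singletonE subset_singletonD)

lemma P_subset:
  assumes "P l n sigma rho k T" "finite T" "T' \<subseteq> T" "T' \<noteq> {}"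
  shows "P l n sigma rho k T'"
  using assms
proof (induction k arbitrary: T T')
  case 0
  then have "T' = T" by (intro card_1_subset_eq) simp_all
  with "0.prems"(1) show ?case by simp
next
  case (Suc k)
  show ?case
  proof (cases "card T = 1")
    case True
    with Suc.prems(3,4) have "T' = T" by (intro card_1_subset_eq)
    with Suc.prems(1) show ?thesis by simp
  next
    case False
    then obtain i where i: "i \<in> vecs l"
      and inj: "card (zeta sigma rho T (Some i) None) = card T"
      and step: "\<forall>ou\<in>vecs n. zeta sigma rho T (Some i) (Some ou) \<noteq> {} \<longrightarrow>
          P l n sigma rho k (zeta sigma rho T (Some i) (Some ou))"
      using Suc.prems(1) by auto
    have "card (zeta sigma rho T' (Some i) None) = card T'"
      using card_zeta_None_subset[OF Suc.prems(2,3) inj] .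
    moreover have "P l n sigma rho k (zeta sigma rho T' (Some i) (Some ou))"
      if "ou \<in> vecs n" "zeta sigma rho T' (Some i) (Some ou) \<noteq> {}" for ou
    proof (rule Suc.IH)
      show sub: "zeta sigma rho T' (Some i) (Some ou) \<subseteq> zeta sigma rho T (Some i) (Some ou)"
        using Suc.prems(3) by (rule zeta_mono)
      show "P l n sigma rho k (zeta sigma rho T (Some i) (Some ou))"
        using step that sub by blast
      show "finite (zeta sigma rho T (Some i) (Some ou))"
        using Suc.prems(2) by (rule finite_zeta)
    qed (rule that(2))
    ultimately show ?thesis using i by (simp only: P.simps) blast
  qed
qed

lemma Gamma_finite_iff: "Gamma l n sigma rho S \<noteq> \<infinity> \<longleftrightarrow> (\<exists>k. P l n sigma rho k S)"
  by (simp add: Gamma_def)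

lemma Gamma_finite_subset:
  assumes "Gamma l n sigma rho T \<noteq> \<infinity>" "finite T" "T' \<subseteq> T" "T' \<noteq> {}"
  shows "Gamma l n sigma rho T' \<noteq> \<infinity>"
  using assms P_subset unfolding Gamma_finite_iff by blast

lemma psi_antimono:
  assumes "finite S2" "S1 \<subseteq> S2"
  shows "psi l n sigma rho S2 \<subseteq> psi l n sigma rho S1"
proof
  fix i assume "i \<in> psi l n sigma rho S2"
  then have i: "i \<in> vecs l"
    and inj: "card (zeta sigma rho S2 (Some i) None) = card S2"
    and step: "\<forall>ou\<in>vecs n. zeta sigma rho S2 (Some i) (Some ou) \<noteq> {} \<longrightarrow>
        Gamma l n sigma rho (zeta sigma rho S2 (Some i) (Some ou)) \<noteq> \<infinity>"
    by (auto simp: psi_def)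
  have "card (zeta sigma rho S1 (Some i) None) = card S1"
    using card_zeta_None_subset[OF assms inj] .
  moreover have "Gamma l n sigma rho (zeta sigma rho S1 (Some i) (Some ou)) \<noteq> \<infinity>"
    if "ou \<in> vecs n" "zeta sigma rho S1 (Some i) (Some ou) \<noteq> {}" for ou
  proof (rule Gamma_finite_subset)
    show sub: "zeta sigma rho S1 (Some i) (Some ou) \<subseteq> zeta sigma rho S2 (Some i) (Some ou)"
      using assms(2) by (rule zeta_mono)
    show "Gamma l n sigma rho (zeta sigma rho S2 (Some i) (Some ou)) \<noteq> \<infinity>"
      using step that sub by blast
    show "finite (zeta sigma rho S2 (Some i) (Some ou))"
      using assms(1) by (rule finite_zeta)
  qed (rule that(2))
  ultimately show "i \<in> psi l n sigma rho S1"
    using i unfolding psi_def by blast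
qed

theorem lemma5:
  fixes l m n :: nat
    and sigma :: "bool list \<Rightarrow> bool list \<Rightarrow> bool list"
    and rho :: "bool list \<Rightarrow> bool list"
    and S1 S2 :: "bool list set"
  assumes sigma_ty: "\<And>i s. i \<in> vecs l \<Longrightarrow> s \<in> vecs m \<Longrightarrow> sigma i s \<in> vecs m"
    and rho_ty: "\<And>s. s \<in> vecs m \<Longrightarrow> rho s \<in> vecs n"
    and S1_ne: "S1 \<noteq> {}" and S2_ne: "S2 \<noteq> {}"
    and S2_sub: "S2 \<subseteq> vecs m"
    and sub: "S1 \<subseteq> S2"
    and fin: "Gamma l n sigma rho S2 \<noteq> \<infinity>"
  shows "psi l n sigma rho S2 \<subseteq> psi l n sigma rho S1"
proof (rule psi_antimono)
  show "finite S2" using S2_sub finite_vecs by (rule finite_subset)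
qed (rule sub)

end
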